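(* The operator norm $\|\cdot\|_\infty$ is the maximum element of the class of $M$-norms $\||\cdot\||$ on $\mathbb{M}_n$ satisfying $\||A\||\le\omega_*(A)$ for all $A\in\mathbb{M}_n$.
   Context: $\mathbb{M}_n$ is the algebra of complex $n\times n$ matrices with identity $I$; $\|\cdot\|_\infty$ is the operator norm, $\omega(A)=\sup\{|\langle x,Ax\rangle|:\|x\|=1\}$ the numerical radius, and $\omega_*(Y)=\sup\{|\mathrm{Tr}(Y^*X)|:\omega(X)\le1\}$ its dual norm. A norm $\||\cdot\||$ on $\mathbb{M}_n$ is an $M$-norm if $\left\||\sum_{i=1}^k C_i^*X_iC_i\right\||\le \max_{i}\||X_i\||$ for all $k$, all $X_i$ and all $C_i$ with $\sum_{i=1}^k C_i^*C_i=I$. *)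

theory Defs
  imports "HOL-Analysis.Analysis"
begin

text \<open>Complex n x n matrices are modelled as complex^'n^'n for a finite index type 'n
  (n = CARD('n)). Vectors complex^'n carry the Euclidean (l2) norm of HOL-Analysis.\<close>

type_synonym 'n cmat = "complex^'n^'n"

definition cinner :: "complex^'n::finite \<Rightarrow> complex^'n \<Rightarrow> complex" where
  "cinner x y = (\<Sum>i\<in>UNIV. cnj (x$i) * y$i)"

definition cadj :: "'n::finite cmat \<Rightarrow> 'n cmat" where
  "cadj A = (\<chi> i j. cnj (A$j$i))"

definition mtrace :: "'n::finite cmat \<Rightarrow> complex" where
  "mtrace A = (\<Sum>i\<in>UNIV. A$i$i)"

definition cscale :: "complex \<Rightarrow> 'n::finite cmat \<Rightarrow> 'n cmat" where
  "cscale c A = (\<chi> i j. c * A$i$j)"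

definition op_norm :: "'n::finite cmat \<Rightarrow> real" where
  "op_norm A = onorm (\<lambda>x. A *v x)"

definition num_radius :: "'n::finite cmat \<Rightarrow> real" where
  "num_radius A = (SUP x\<in>{x. norm x = 1}. cmod (cinner x (A *v x)))"

definition num_radius_dual :: "'n::finite cmat \<Rightarrow> real" where
  "num_radius_dual Y = (SUP X\<in>{X. num_radius X \<le> 1}. cmod (mtrace (cadj Y ** X)))"

definition is_matrix_norm :: "('n::finite cmat \<Rightarrow> real) \<Rightarrow> bool" where
  "is_matrix_norm N \<longleftrightarrow>
     (\<forall>A. 0 \<le> N A) \<and> (\<forall>A. N A = 0 \<longleftrightarrow> A = 0) \<and>
     (\<forall>c A. N (cscale c A) = cmod c * N A) \<and>
     (\<forall>A B. N (A + B) \<le> N A + N B)"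

definition is_M_norm :: "('n::finite cmat \<Rightarrow> real) \<Rightarrow> bool" where
  "is_M_norm N \<longleftrightarrow> is_matrix_norm N \<and>
     (\<forall>(k::nat) (X::nat \<Rightarrow> 'n cmat) (C::nat \<Rightarrow> 'n cmat).
        (\<Sum>i<k. cadj (C i) ** C i) = mat 1 \<longrightarrow>
        N (\<Sum>i<k. cadj (C i) ** X i ** C i) \<le> Max ((\<lambda>i. N (X i)) ` {..<k}))"

end

theory Submission
  imports Defs
begin

text \<open>
  The operator norm is an M-norm because a unital channel
  \<open>X \<mapsto> \<Sum> C\<^sub>i\<^sup>* X\<^sub>i C\<^sub>i\<close> does not increase it (Cauchy--Schwarz, once in the vector
  space and once over the index i), and it lies below \<open>\<omega>\<^sub>*\<close> because \<open>|A u|\<close> is the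
  trace pairing of A with a rank-one matrix \<open>y u\<^sup>*\<close> of numerical radius at most 1.

  For maximality, scale A to a contraction. Halmos' unitary dilation U of A has A as
  its upper-left corner; writing \<open>U = \<Sum> \<mu>\<^sub>z z z\<^sup>*\<close> spectrally with \<open>|\<mu>\<^sub>z| = 1\<close> and
  compressing to the corner gives \<open>A = \<Sum> \<mu>\<^sub>z w\<^sub>z w\<^sub>z\<^sup>*\<close> with \<open>\<Sum> w\<^sub>z w\<^sub>z\<^sup>* = I\<close>. This is
  the image of the rank-one matrices \<open>\<mu>\<^sub>z e e\<^sup>*\<close>, each of dual numerical radius at most 1,
  under a unital channel, so every M-norm below \<open>\<omega>\<^sub>*\<close> is at most 1 on A.
\<close>

definition outer :: "complex^'n::finite \<Rightarrow> complex^'n \<Rightarrow> 'n cmat" where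
  "outer u v = (\<chi> i j. u$i * cnj (v$j))"

lemma cinner_add_left: "cinner (x + y) z = cinner x z + cinner y z"
  by (simp add: cinner_def sum.distrib distrib_right)

lemma cinner_add_right: "cinner x (y + z) = cinner x y + cinner x z"
  by (simp add: cinner_def sum.distrib distrib_left)

lemma cinner_diff_right: "cinner x (y - z) = cinner x y - cinner x z"
  by (simp add: cinner_def sum_subtractf right_diff_distrib)

lemma cinner_scale_left: "cinner (c *s x) y = cnj c * cinner x y"
  by (simp add: cinner_def sum_distrib_left mult.assoc)

lemma cinner_scale_right: "cinner x (c *s y) = c * cinner x y"
  by (simp add: cinner_def sum_distrib_left mult.left_commute)

lemma cinner_zero_left [simp]: "cinner 0 x = 0"
  and cinner_zero_right [simp]: "cinner x 0 = 0"
  by (simp_all add: cinner_def)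

lemma cinner_sum_right: "cinner x (\<Sum>i\<in>I. f i) = (\<Sum>i\<in>I. cinner x (f i))"
  by (induct I rule: infinite_finite_induct) (auto simp: cinner_add_right)

lemma cnj_cinner: "cnj (cinner x y) = cinner y x"
  by (simp add: cinner_def mult.commute)

lemma Re_cinner: "Re (cinner x y) = inner x y"
  by (simp add: cinner_def inner_vec_def inner_complex_def)

lemma cinner_axis: "cinner (axis k 1) v = v $ k"
proof -
  have "cinner (axis k 1) v = (\<Sum>i\<in>UNIV. if i = k then v$i else 0)"
    unfolding cinner_def by (intro sum.cong refl) (simp add: axis_def)
  thus ?thesis by simp
qed

lemma mv_axis: "(X *v axis l 1) $ k = X $ k $ (l::'n::finite)"
proof -
  have "(X *v axis l 1) $ k = (\<Sum>j\<in>UNIV. if j = l then X$k$j else 0)"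
    unfolding matrix_vector_mult_def vec_lambda_beta by (intro sum.cong refl) (simp add: axis_def)
  thus ?thesis by simp
qed

lemma power2_norm_cvec: "(norm (x::complex^'n::finite))\<^sup>2 = (\<Sum>i\<in>UNIV. (cmod (x$i))\<^sup>2)"
  by (simp add: norm_vec_def L2_set_def sum_nonneg)

lemma cinner_self: "cinner x x = complex_of_real ((norm x)\<^sup>2)"
proof -
  have "cinner x x = (\<Sum>i\<in>UNIV. complex_of_real ((cmod (x$i))\<^sup>2))"
    unfolding cinner_def by (intro sum.cong refl) (metis complex_norm_square mult.commute)
  also have "\<dots> = complex_of_real ((norm x)\<^sup>2)" by (simp add: power2_norm_cvec)
  finally show ?thesis .
qed

lemma norm_cscale: "norm (c *s (x::complex^'n::finite)) = cmod c * norm x"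
proof -
  have "(norm (c *s x))\<^sup>2 = (cmod c * norm x)\<^sup>2"
    by (simp add: power2_norm_cvec power_mult_distrib norm_mult sum_distrib_left)
  thus ?thesis using power2_eq_iff_nonneg by fastforce
qed

lemma scaleR_eq_cscale: "t *\<^sub>R (x::complex^'n::finite) = complex_of_real t *s x"
  unfolding vec_eq_iff vector_scaleR_component vector_smult_component
  by (simp add: scaleR_conv_of_real)

lemma cinner_cauchy_schwarz: "cmod (cinner x y) \<le> norm x * norm y"
proof (cases "cinner x y = 0")
  case True thus ?thesis by simp
next
  case False
  \<comment> \<open>rotate x so that the complex inner product becomes the real one\<close>
  define c where "c = cinner x y / complex_of_real (cmod (cinner x y))"
  have "cinner (c *s x) y = complex_of_real (cmod (cinner x y))"
    using False by (simp add: cinner_scale_left c_def field_simps)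
       (metis complex_norm_square of_real_mult power2_eq_square)
  hence "cmod (cinner x y) = inner (c *s x) y"
    by (metis Re_cinner Re_complex_of_real)
  also have "\<dots> \<le> norm (c *s x) * norm y" by (rule norm_cauchy_schwarz)
  also have "\<dots> = norm x * norm y" using False by (simp add: norm_cscale c_def norm_divide)
  finally show ?thesis .
qed

lemma mv_cscale: "A *v (c *s x) = c *s (A *v (x::complex^'n::finite))"
  by (simp add: vec_eq_iff matrix_vector_mult_def sum_distrib_left mult.left_commute)

lemma mv_scaleR: "A *v (t *\<^sub>R x) = t *\<^sub>R (A *v (x::complex^'n::finite))"
  by (simp add: scaleR_eq_cscale mv_cscale)

lemma cscale_mv: "cscale c A *v x = c *s (A *v x)"
  by (simp add: vec_eq_iff matrix_vector_mult_def cscale_def sum_distrib_left mult.assoc)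

lemma sum_mv: "(\<Sum>i\<in>I. M i) *v x = (\<Sum>i\<in>I. M i *v (x::complex^'n::finite))"
  by (induct I rule: infinite_finite_induct) (auto simp: matrix_vector_mult_add_rdistrib)

lemma mv_sum: "A *v (\<Sum>i\<in>I. f i) = (\<Sum>i\<in>I. A *v (f i :: complex^'n::finite))"
  by (induct I rule: infinite_finite_induct) (auto simp: matrix_vector_right_distrib)

lemma mult_sum_right: "(M::'n::finite cmat) ** (\<Sum>i\<in>I. f i) = (\<Sum>i\<in>I. M ** f i)"
  by (induct I rule: infinite_finite_induct) (auto simp: matrix_add_ldistrib)

lemma matrix_mul_uminus_left: "(- A) ** B = - (A ** (B::'n::finite cmat))"
  and matrix_mul_uminus_right: "A ** (- B) = - (A ** (B::'n::finite cmat))"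
  by (simp_all add: vec_eq_iff matrix_matrix_mult_def sum_negf)

lemma cscale_cscale: "cscale a (cscale b A) = cscale (a * b) A"
  by (simp add: vec_eq_iff cscale_def mult.assoc)

lemma cscale_one [simp]: "cscale 1 A = A"
  and cscale_zero [simp]: "cscale 0 A = 0"
  by (simp_all add: vec_eq_iff cscale_def)

lemma mat_1_neq_0: "(mat 1 :: 'n::finite cmat) \<noteq> 0"
proof
  assume "(mat 1 :: 'n cmat) = 0"
  hence "(mat 1 :: 'n cmat) $ undefined $ undefined = 0" by simp
  thus False by (simp add: mat_def)
qed

lemma cadj_cadj [simp]: "cadj (cadj A) = A"
  and cadj_mat_1 [simp]: "cadj (mat 1) = (mat 1 :: 'n::finite cmat)"
  and cadj_zero [simp]: "cadj 0 = (0 :: 'n::finite cmat)"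
  by (simp_all add: cadj_def vec_eq_iff mat_def)

lemma cadj_add: "cadj (A + B) = cadj A + cadj B"
  and cadj_diff: "cadj (A - B) = cadj A - cadj B"
  and cadj_uminus: "cadj (- A) = - cadj A"
  and cadj_cscale: "cadj (cscale c A) = cscale (cnj c) (cadj A)"
  by (simp_all add: vec_eq_iff cadj_def cscale_def)

lemma cadj_mult: "cadj (A ** B) = cadj B ** cadj A"
  by (simp add: vec_eq_iff matrix_matrix_mult_def cadj_def cnj_sum mult.commute)

lemma cadj_sum: "cadj (\<Sum>i\<in>I. f i) = (\<Sum>i\<in>I. cadj (f i :: 'n::finite cmat))"
  by (induct I rule: infinite_finite_induct) (auto simp: cadj_add)

lemma cinner_adj: "cinner x (A *v y) = cinner (cadj A *v x) y"
  unfolding cinner_def cadj_def matrix_vector_mult_def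
  by (simp add: sum_distrib_left sum_distrib_right cnj_sum mult.assoc mult.left_commute)
     (rule sum.swap)

lemma cinner_adj': "cinner (A *v x) y = cinner x (cadj A *v y)"
  by (simp add: cinner_adj)

lemma outer_mv: "outer u v *v x = cinner v x *s u"
  by (simp add: vec_eq_iff matrix_vector_mult_def outer_def cinner_def sum_distrib_left
      mult.commute mult.left_commute)

lemma mult_outer: "M ** outer u v = outer (M *v u) v"
  by (simp add: vec_eq_iff matrix_matrix_mult_def matrix_vector_mult_def outer_def
      sum_distrib_right mult.assoc)

lemma outer_mult: "outer u v ** M = outer u (cadj M *v v)"
  by (simp add: vec_eq_iff matrix_matrix_mult_def matrix_vector_mult_def outer_def cadj_def
      sum_distrib_left)
     (intro allI sum.cong refl, simp add: mult.commute)

lemma cadj_outer: "cadj (outer u v) = outer v u"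
  by (simp add: vec_eq_iff cadj_def outer_def mult.commute)

lemma cscale_outer: "cscale c (outer u v) = outer (c *s u) v"
  by (simp add: vec_eq_iff cscale_def outer_def mult.assoc)

lemma mtrace_outer: "mtrace (outer u v) = cinner v u"
  by (simp add: mtrace_def outer_def cinner_def mult.commute)

lemma mtrace_adj_outer_mult: "mtrace (cadj (outer u v) ** X) = cinner u (X *v v)"
  by (simp add: cadj_outer outer_mult mtrace_outer cinner_adj')

section \<open>Spectral theorem for commuting Hermitian matrices\<close>

definition herm :: "'n::finite cmat \<Rightarrow> bool" where
  "herm H \<longleftrightarrow> cadj H = H"

definition csubspace :: "(complex^'n::finite) set \<Rightarrow> bool" where
  "csubspace W \<longleftrightarrow> 0 \<in> W \<and> (\<forall>x\<in>W. \<forall>y\<in>W. x + y \<in> W) \<and> (\<forall>c. \<forall>x\<in>W. c *s x \<in> W)"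

definition orthonormal_set :: "(complex^'n::finite) set \<Rightarrow> bool" where
  "orthonormal_set B \<longleftrightarrow>
     (\<forall>b\<in>B. cinner b b = 1) \<and> (\<forall>b\<in>B. \<forall>c\<in>B. b \<noteq> c \<longrightarrow> cinner b c = 0)"

lemma csubspace_imp_subspace: "csubspace W \<Longrightarrow> subspace W"
  unfolding csubspace_def subspace_def by (simp add: scaleR_eq_cscale)

lemma herm_inner: "herm H \<Longrightarrow> inner x (H *v y) = inner (H *v x) y"
  by (metis Re_cinner cinner_adj herm_def)

lemma herm_eigenvector_orthogonal:
  assumes "herm M" "M *v b = a *s b" "cinner b x = 0"
  shows "cinner b (M *v x) = 0"
  using assms by (simp add: cinner_adj herm_def cinner_scale_left)

lemma linear_coeff_zero_if_nonneg:
  fixes a b :: real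
  assumes "\<forall>t. 0 \<le> a * t + b * t\<^sup>2"
  shows "a = 0"
proof (rule ccontr)
  assume a: "a \<noteq> 0"
  define d where "d = \<bar>b\<bar> + 1"
  have d: "d > 0" "b < d" by (auto simp: d_def)
  have "a * (- a / (2 * d)) + b * (- a / (2 * d))\<^sup>2 = a\<^sup>2 / d * (b / (4 * d) - 1 / 2)"
    using d by (simp add: field_simps power2_eq_square)
  also have "\<dots> < 0"
    using a d by (intro mult_pos_neg) (simp_all add: field_simps)
  finally show False using assms by (metis not_le)
qed

lemma rayleigh_max_residual_orthogonal:
  assumes H: "herm H" and W: "subspace W" and x0: "x0 \<in> W" and y: "y \<in> W"
    and max: "\<forall>y\<in>W. inner y (H *v y) \<le> l * (norm y)\<^sup>2"
    and at_x0: "inner x0 (H *v x0) = l * (norm x0)\<^sup>2"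
  shows "inner y (l *\<^sub>R x0 - H *v x0) = 0"
proof -
  have "0 \<le> (2 * inner y (l *\<^sub>R x0 - H *v x0)) * t + (l * (norm y)\<^sup>2 - inner y (H *v y)) * t\<^sup>2"
    for t :: real
  proof -
    have "x0 + t *\<^sub>R y \<in> W" using x0 y W by (simp add: subspace_add subspace_mul)
    hence le: "inner (x0 + t *\<^sub>R y) (H *v (x0 + t *\<^sub>R y)) \<le> l * (norm (x0 + t *\<^sub>R y))\<^sup>2"
      using max by blast
    have "inner x0 (H *v y) = inner y (H *v x0)"
      using herm_inner[OF H] by (simp add: inner_commute)
    hence e1: "inner (x0 + t *\<^sub>R y) (H *v (x0 + t *\<^sub>R y))
        = inner x0 (H *v x0) + 2 * t * inner y (H *v x0) + t\<^sup>2 * inner y (H *v y)"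
      by (simp add: matrix_vector_right_distrib mv_scaleR inner_add_left
          inner_add_right power2_eq_square algebra_simps)
    have e2: "(norm (x0 + t *\<^sub>R y))\<^sup>2 = (norm x0)\<^sup>2 + 2 * t * inner x0 y + t\<^sup>2 * (norm y)\<^sup>2"
      unfolding power2_norm_eq_inner
      by (simp add: inner_add_left inner_add_right inner_commute power2_eq_square algebra_simps)
    show ?thesis
      using le at_x0 unfolding e1 e2
      by (simp add: inner_diff_right inner_commute algebra_simps power2_eq_square)
  qed
  thus ?thesis using linear_coeff_zero_if_nonneg by fastforce
qed

lemma herm_eigenvector_in_invariant:
  fixes H :: "'n::finite cmat"
  assumes H: "herm H" and W: "csubspace W" and inv: "\<forall>x\<in>W. H *v x \<in> W"
    and "x1 \<in> W" "x1 \<noteq> 0"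
  shows "\<exists>x\<in>W. x \<noteq> 0 \<and> (\<exists>l::real. H *v x = complex_of_real l *s x)"
proof -
  have sub: "subspace W" using W by (rule csubspace_imp_subspace)
  let ?S = "W \<inter> sphere 0 1"
  let ?f = "\<lambda>x. inner x (H *v x)"
  have "compact ?S" by (rule closed_Int_compact[OF closed_subspace[OF sub] compact_sphere])
  moreover have "sgn x1 \<in> ?S"
    using assms sub by (simp add: sgn_div_norm subspace_mul norm_sgn)
  moreover have "continuous_on ?S ?f"
    by (intro continuous_on_inner continuous_on_id linear_continuous_on
        matrix_vector_mul_bounded_linear)
  ultimately obtain x0 where x0: "x0 \<in> ?S" and x0_max: "\<forall>y\<in>?S. ?f y \<le> ?f x0"
    using continuous_attains_sup[of ?S ?f] by blast
  define l where "l = ?f x0"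
  have x0W: "x0 \<in> W" and nx0: "norm x0 = 1" using x0 by auto
  have max: "\<forall>y\<in>W. ?f y \<le> l * (norm y)\<^sup>2"
  proof
    fix y assume y: "y \<in> W"
    show "?f y \<le> l * (norm y)\<^sup>2"
    proof (cases "y = 0")
      case False
      have "sgn y \<in> ?S" using y sub False by (simp add: sgn_div_norm subspace_mul norm_sgn)
      hence "?f (sgn y) \<le> l" using x0_max l_def by blast
      thus ?thesis
        using False by (simp add: sgn_div_norm mv_scaleR field_simps power2_eq_square)
    qed simp
  qed
  define z where "z = l *\<^sub>R x0 - H *v x0"
  have "z \<in> W" unfolding z_def using x0W inv sub by (simp add: subspace_diff subspace_mul)
  hence "inner z z = 0"
    using rayleigh_max_residual_orthogonal[OF H sub x0W _ max] nx0 by (simp add: l_def z_def)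
  hence "H *v x0 = complex_of_real l *s x0" by (simp add: z_def scaleR_eq_cscale)
  moreover have "x0 \<noteq> 0" using nx0 by auto
  ultimately show ?thesis using x0W by blast
qed

lemma commuting_herm_common_eigenvector:
  fixes H K :: "'n::finite cmat"
  assumes H: "herm H" and K: "herm K" and comm: "H ** K = K ** H"
    and W: "csubspace W" and invH: "\<forall>x\<in>W. H *v x \<in> W" and invK: "\<forall>x\<in>W. K *v x \<in> W"
    and "x1 \<in> W" "x1 \<noteq> 0"
  shows "\<exists>x\<in>W. x \<noteq> 0 \<and>
           (\<exists>a b::real. H *v x = complex_of_real a *s x \<and> K *v x = complex_of_real b *s x)"
proof -
  obtain x a where x: "x \<in> W" "x \<noteq> 0" and xa: "H *v x = complex_of_real a *s x"
    using herm_eigenvector_in_invariant[OF H W invH] assms by blast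
  define E where "E = {y\<in>W. H *v y = complex_of_real a *s y}"
  have E: "csubspace E"
    using W unfolding csubspace_def E_def
    by (auto simp: matrix_vector_right_distrib vector_add_ldistrib mv_cscale
        vec.scale_left_commute)
  have invE: "\<forall>y\<in>E. K *v y \<in> E"
  proof
    fix y assume y: "y \<in> E"
    have "H *v (K *v y) = K *v (H *v y)" by (simp add: matrix_vector_mul_assoc comm)
    also have "\<dots> = complex_of_real a *s (K *v y)" using y by (simp add: E_def mv_cscale)
    finally show "K *v y \<in> E" using y invK by (simp add: E_def)
  qed
  have "x \<in> E" using x xa by (simp add: E_def)
  then obtain y b where "y \<in> E" "y \<noteq> 0" "K *v y = complex_of_real b *s y"
    using herm_eigenvector_in_invariant[OF K E invE] x by blast
  thus ?thesis by (auto simp: E_def)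
qed

lemma orthonormal_set_finite_card:
  assumes "orthonormal_set (B :: (complex^'n::finite) set)"
  shows "finite B \<and> card B \<le> DIM(complex^'n)"
proof -
  have "pairwise orthogonal B"
    using assms unfolding orthonormal_set_def pairwise_def orthogonal_def
    by (metis Re_cinner zero_complex.simps(1))
  moreover have "0 \<notin> B" using assms unfolding orthonormal_set_def by force
  ultimately show ?thesis using independent_bound pairwise_orthogonal_independent by blast
qed

lemma orthonormal_set_insert:
  assumes "orthonormal_set B" "cinner u u = 1" "\<forall>b\<in>B. cinner b u = 0"
  shows "orthonormal_set (insert u B)"
  using assms cnj_cinner[of _ u] unfolding orthonormal_set_def by (metis complex_cnj_zero insertE)

lemma orthonormal_expansion:
  assumes "(\<Sum>b\<in>B. outer b b) = mat 1"
  shows "x = (\<Sum>b\<in>B. cinner b x *s b)"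
proof -
  have "x = (\<Sum>b\<in>B. outer b b) *v x" using assms by simp
  thus ?thesis by (simp add: sum_mv outer_mv)
qed

lemma orthonormal_coeff:
  assumes B: "orthonormal_set B" and "finite B" "b' \<in> B"
  shows "(\<Sum>b\<in>B. f b * cinner b' b) = f b'"
proof -
  have "(\<Sum>b\<in>B. f b * cinner b' b) = f b' * cinner b' b' + (\<Sum>b\<in>B - {b'}. f b * cinner b' b)"
    using assms by (simp add: sum.remove)
  also have "(\<Sum>b\<in>B - {b'}. f b * cinner b' b) = 0"
    using B \<open>b' \<in> B\<close> unfolding orthonormal_set_def by (intro sum.neutral) auto
  finally show ?thesis using B \<open>b' \<in> B\<close> unfolding orthonormal_set_def by simp
qed

lemma orthonormal_resolution_of_identity:
  assumes B: "orthonormal_set B" "finite B"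
    and complete: "\<And>x. \<forall>b\<in>B. cinner b x = 0 \<Longrightarrow> x = 0"
  shows "(\<Sum>b\<in>B. outer b b) = mat 1"
proof -
  have "(\<Sum>b\<in>B. outer b b) *v x = mat 1 *v x" for x
  proof -
    have "\<forall>b'\<in>B. cinner b' (x - (\<Sum>b\<in>B. cinner b x *s b)) = 0"
      using orthonormal_coeff[OF B]
      by (simp add: cinner_diff_right cinner_sum_right cinner_scale_right)
    hence "x - (\<Sum>b\<in>B. cinner b x *s b) = 0" by (rule complete)
    thus ?thesis by (simp add: sum_mv outer_mv)
  qed
  thus ?thesis by (simp add: matrix_eq)
qed

lemma eq_on_orthonormal_basis:
  fixes F G :: "'n::finite cmat"
  assumes B: "(\<Sum>b\<in>B. outer b b) = mat 1" and FG: "\<forall>b\<in>B. F *v b = G *v b"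
  shows "F = G"
proof -
  have "F *v x = G *v x" for x
  proof -
    have "F *v x = F *v (\<Sum>b\<in>B. cinner b x *s b)" using orthonormal_expansion[OF B] by metis
    also have "\<dots> = G *v (\<Sum>b\<in>B. cinner b x *s b)" using FG by (simp add: mv_sum mv_cscale)
    finally show ?thesis using orthonormal_expansion[OF B] by metis
  qed
  thus ?thesis by (simp add: matrix_eq)
qed

text \<open>A maximal orthonormal set of common eigenvectors is complete: its orthogonal
  complement is invariant under H and K, so a nonzero vector in it would yield one
  more common eigenvector.\<close>

lemma commuting_herm_spectral:
  fixes H K :: "'n::finite cmat"
  assumes H: "herm H" and K: "herm K" and comm: "H ** K = K ** H"
  shows "\<exists>B. orthonormal_set B \<and> finite B \<and> (\<Sum>b\<in>B. outer b b) = mat 1 \<and>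
     (\<forall>b\<in>B. \<exists>a c::real. H *v b = complex_of_real a *s b \<and> K *v b = complex_of_real c *s b)"
proof -
  define P where "P B \<longleftrightarrow> orthonormal_set B \<and>
     (\<forall>b\<in>B. \<exists>a c::real. H *v b = complex_of_real a *s b \<and> K *v b = complex_of_real c *s b)"
    for B :: "(complex^'n) set"
  have "P {}" by (simp add: P_def orthonormal_set_def)
  moreover have "\<forall>B. P B \<longrightarrow> card B < DIM(complex^'n) + 1"
    using orthonormal_set_finite_card unfolding P_def by fastforce
  ultimately obtain B where PB: "P B" and maxB: "\<forall>B'. P B' \<longrightarrow> card B' \<le> card B"
    using ex_has_greatest_nat[of P "{}" card] by blast
  have onB: "orthonormal_set B" and finB: "finite B"
    using PB orthonormal_set_finite_card by (auto simp: P_def)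
  define W where "W = {x. \<forall>b\<in>B. cinner b x = 0}"
  have W: "csubspace W"
    unfolding csubspace_def W_def by (simp add: cinner_add_right cinner_scale_right)
  have invH: "\<forall>x\<in>W. H *v x \<in> W" and invK: "\<forall>x\<in>W. K *v x \<in> W"
    using PB herm_eigenvector_orthogonal[OF H] herm_eigenvector_orthogonal[OF K]
    unfolding P_def W_def by fast+
  have "x = 0" if xW: "x \<in> W" for x
  proof (rule ccontr)
    assume "x \<noteq> 0"
    then obtain y a c where yW: "y \<in> W" "y \<noteq> 0"
      and ya: "H *v y = complex_of_real a *s y" and yc: "K *v y = complex_of_real c *s y"
      using commuting_herm_common_eigenvector[OF H K comm W invH invK xW \<open>x \<noteq> 0\<close>] by blast
    define u where "u = complex_of_real (1 / norm y) *s y"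
    have uu: "cinner u u = 1" using yW by (simp add: u_def cinner_self norm_cscale norm_divide)
    have uB: "\<forall>b\<in>B. cinner b u = 0" using yW by (simp add: u_def W_def cinner_scale_right)
    have "H *v u = complex_of_real a *s u \<and> K *v u = complex_of_real c *s u"
      by (simp add: u_def mv_cscale ya yc vec.scale_left_commute)
    hence "P (insert u B)"
      using PB orthonormal_set_insert[OF onB uu uB] unfolding P_def by blast
    moreover have "u \<notin> B" using uu uB by force
    ultimately show False using maxB[rule_format, of "insert u B"] finB by simp
  qed
  hence "(\<Sum>b\<in>B. outer b b) = mat 1"
    using orthonormal_resolution_of_identity[OF onB finB] by (auto simp: W_def)
  thus ?thesis using onB finB PB unfolding P_def by blast
qed

lemma herm_spectral:
  fixes H :: "'n::finite cmat"
  assumes "herm H"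
  shows "\<exists>B. orthonormal_set B \<and> finite B \<and> (\<Sum>b\<in>B. outer b b) = mat 1 \<and>
     (\<forall>b\<in>B. \<exists>a::real. H *v b = complex_of_real a *s b)"
proof -
  have "herm (0::'n cmat)" by (simp add: herm_def)
  from commuting_herm_spectral[OF assms this] show ?thesis by auto
qed

text \<open>A normal matrix is H + iK with commuting Hermitian H, K (its real and imaginary parts).\<close>

lemma normal_spectral:
  fixes M :: "'n::finite cmat"
  assumes normal: "cadj M ** M = M ** cadj M"
  shows "\<exists>B. orthonormal_set B \<and> finite B \<and> (\<Sum>b\<in>B. outer b b) = mat 1 \<and>
     (\<forall>b\<in>B. \<exists>\<mu>. M *v b = \<mu> *s b)"
proof -
  define H where "H = cscale (1/2) (M + cadj M)"
  define K where "K = cscale (-\<i>/2) (M - cadj M)"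
  have "herm H" "herm K"
    unfolding herm_def H_def K_def by (simp_all add: vec_eq_iff cadj_def cscale_def algebra_simps)
  moreover have "H ** K = K ** H"
  proof -
    have "M *v (cadj M *v x) = cadj M *v (M *v x)" for x
      by (simp add: matrix_vector_mul_assoc normal)
    hence "(H ** K) *v x = (K ** H) *v x" for x
      by (simp add: H_def K_def matrix_vector_mul_assoc[symmetric] cscale_mv mv_cscale
          matrix_vector_mult_add_rdistrib matrix_vector_mult_diff_rdistrib
          matrix_vector_right_distrib matrix_vector_mult_diff_distrib vec_eq_iff algebra_simps)
    thus ?thesis by (simp add: matrix_eq)
  qed
  ultimately obtain B where B: "orthonormal_set B" "finite B" "(\<Sum>b\<in>B. outer b b) = mat 1"
    and eig: "\<forall>b\<in>B. \<exists>a c::real. H *v b = complex_of_real a *s b \<and> K *v b = complex_of_real c *s b"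
    using commuting_herm_spectral by blast
  have "M *v x = H *v x + \<i> *s (K *v x)" for x
    by (simp add: H_def K_def cscale_mv matrix_vector_mult_add_rdistrib
        matrix_vector_mult_diff_rdistrib vec_eq_iff algebra_simps)
  hence "\<forall>b\<in>B. \<exists>\<mu>. M *v b = \<mu> *s b"
    using eig by (metis vector_sadd_rdistrib vector_smult_assoc)
  thus ?thesis using B by blast
qed

lemma op_norm_bound: "norm (A *v x) \<le> op_norm A * norm (x::complex^'n::finite)"
  unfolding op_norm_def by (rule onorm[OF matrix_vector_mul_bounded_linear])

lemma op_norm_le:
  fixes A :: "'n::finite cmat"
  assumes "0 \<le> b" "\<And>x. norm (A *v x) \<le> b * norm x"
  shows "op_norm A \<le> b"
  unfolding op_norm_def by (rule onorm_bound) (use assms in auto)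

lemma op_norm_le_unit:
  fixes A :: "'n::finite cmat"
  assumes "0 \<le> b" and unit: "\<And>x. norm x = 1 \<Longrightarrow> norm (A *v x) \<le> b"
  shows "op_norm A \<le> b"
proof (rule op_norm_le[OF \<open>0 \<le> b\<close>])
  fix x :: "complex^'n"
  show "norm (A *v x) \<le> b * norm x"
  proof (cases "x = 0")
    case False
    have "norm (A *v sgn x) \<le> b" using unit False by (simp add: norm_sgn)
    thus ?thesis using False by (simp add: sgn_div_norm mv_scaleR field_simps)
  qed simp
qed

lemma op_norm_nonneg: "0 \<le> op_norm (A::'n::finite cmat)"
  unfolding op_norm_def by (rule onorm_pos_le[OF matrix_vector_mul_bounded_linear])

lemma op_norm_eq_0_iff: "op_norm A = 0 \<longleftrightarrow> A = (0::'n::finite cmat)"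
  unfolding op_norm_def onorm_eq_0[OF matrix_vector_mul_bounded_linear]
  by (metis matrix_eq matrix_vector_mult_0)

lemma op_norm_cscale_le: "op_norm (cscale c A) \<le> cmod c * op_norm (A::'n::finite cmat)"
proof (rule op_norm_le)
  show "0 \<le> cmod c * op_norm A" using op_norm_nonneg[of A] by simp
  fix x :: "complex^'n"
  have "norm (cscale c A *v x) = cmod c * norm (A *v x)" by (simp add: cscale_mv norm_cscale)
  also have "\<dots> \<le> cmod c * (op_norm A * norm x)" by (rule mult_left_mono[OF op_norm_bound]) simp
  finally show "norm (cscale c A *v x) \<le> cmod c * op_norm A * norm x" by (simp add: mult.assoc)
qed

lemma op_norm_cscale: "op_norm (cscale c A) = cmod c * op_norm (A::'n::finite cmat)"
proof (cases "c = 0")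
  case False
  have "op_norm A = op_norm (cscale (1/c) (cscale c A))" using False by (simp add: cscale_cscale)
  also have "\<dots> \<le> op_norm (cscale c A) / cmod c"
    using op_norm_cscale_le[of "1/c" "cscale c A"] by (simp add: norm_divide)
  finally show ?thesis
    using False op_norm_cscale_le[of c A] by (simp add: pos_le_divide_eq mult.commute)
qed (simp add: op_norm_eq_0_iff)

lemma op_norm_triangle: "op_norm (A + B) \<le> op_norm A + op_norm (B::'n::finite cmat)"
proof -
  have "(*v) (A + B) = (\<lambda>x. A *v x + B *v x)" by (rule ext) (simp add: matrix_vector_mult_add_rdistrib)
  thus ?thesis unfolding op_norm_def
    using onorm_triangle[OF matrix_vector_mul_bounded_linear matrix_vector_mul_bounded_linear, of A B]
    by simp
qed

lemma op_norm_cadj_le: "op_norm (cadj A) \<le> op_norm (A::'n::finite cmat)"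
proof (rule op_norm_le[OF op_norm_nonneg])
  fix x :: "complex^'n"
  define y where "y = cadj A *v x"
  have "(norm y)\<^sup>2 = Re (cinner x (A *v y))" by (simp add: y_def cinner_adj cinner_self)
  also have "\<dots> \<le> norm x * norm (A *v y)"
    using complex_Re_le_cmod cinner_cauchy_schwarz order_trans by blast
  also have "\<dots> \<le> norm x * (op_norm A * norm y)" by (simp add: mult_left_mono op_norm_bound)
  finally have "norm y * norm y \<le> (op_norm A * norm x) * norm y" by (simp add: power2_eq_square mult_ac)
  thus "norm y \<le> op_norm A * norm x"
    using op_norm_nonneg[of A] by (cases "norm y = 0") (auto simp: mult_le_cancel_right)
qed

lemma op_norm_cadj: "op_norm (cadj A) = op_norm (A::'n::finite cmat)"
  using op_norm_cadj_le[of A] op_norm_cadj_le[of "cadj A"] by simp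

lemma resolution_sum_norm_square:
  assumes "(\<Sum>i<k. cadj (C i) ** C i) = (mat 1 :: 'n::finite cmat)"
  shows "(\<Sum>i<k. (norm (C i *v v))\<^sup>2) = (norm v)\<^sup>2"
proof -
  have "(\<Sum>i<k. (norm (C i *v v))\<^sup>2) = Re (\<Sum>i<k. cinner (C i *v v) (C i *v v))"
    by (simp add: cinner_self)
  also have "(\<Sum>i<k. cinner (C i *v v) (C i *v v)) = cinner v ((\<Sum>i<k. cadj (C i) ** C i) *v v)"
    by (simp add: sum_mv cinner_sum_right cinner_adj' matrix_vector_mul_assoc[symmetric])
  finally show ?thesis using assms by (simp add: cinner_self)
qed

text \<open>Cauchy--Schwarz twice: \<open>|y|\<^sup>2 = \<Sum> \<langle>C\<^sub>i y, X\<^sub>i C\<^sub>i x\<rangle> \<le> m \<Sum> |C\<^sub>i y| |C\<^sub>i x| \<le> m |y| |x|\<close> for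
  \<open>y = (\<Sum> C\<^sub>i\<^sup>* X\<^sub>i C\<^sub>i) x\<close>, the last step since \<open>\<Sum> |C\<^sub>i v|\<^sup>2 = |v|\<^sup>2\<close>.\<close>

lemma norm_unital_channel_le:
  fixes C X :: "nat \<Rightarrow> 'n::finite cmat"
  assumes resolution: "(\<Sum>i<k. cadj (C i) ** C i) = mat 1"
    and bound: "\<And>i. i < k \<Longrightarrow> op_norm (X i) \<le> m" and "0 \<le> m"
  shows "norm ((\<Sum>i<k. cadj (C i) ** X i ** C i) *v x) \<le> m * norm x"
proof -
  define y where "y = (\<Sum>i<k. cadj (C i) ** X i ** C i) *v x"
  define a where "a i = norm (C i *v y)" for i
  define b where "b i = norm (C i *v x)" for i
  have term_le: "Re (cinner (C i *v y) (X i *v (C i *v x))) \<le> m * (a i * b i)" if "i < k" for i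
  proof -
    have "Re (cinner (C i *v y) (X i *v (C i *v x))) \<le> a i * norm (X i *v (C i *v x))"
      unfolding a_def using complex_Re_le_cmod cinner_cauchy_schwarz order_trans by blast
    also have "\<dots> \<le> a i * (m * b i)"
    proof (intro mult_left_mono)
      show "norm (X i *v (C i *v x)) \<le> m * b i"
        unfolding b_def using op_norm_bound[of "X i" "C i *v x"] bound[OF that]
        by (meson mult_right_mono norm_ge_zero order_trans)
    qed (simp add: a_def)
    finally show ?thesis by (simp add: mult_ac)
  qed
  have "(norm y)\<^sup>2 = Re (cinner y y)" by (simp add: cinner_self)
  also have "cinner y y = cinner y ((\<Sum>i<k. cadj (C i) ** X i ** C i) *v x)"
    by (simp only: y_def)
  also have "\<dots> = (\<Sum>i<k. cinner (C i *v y) (X i *v (C i *v x)))"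
    by (simp add: sum_mv cinner_sum_right cinner_adj matrix_vector_mul_assoc[symmetric])
  also have "Re \<dots> \<le> m * (\<Sum>i<k. a i * b i)"
    unfolding Re_sum sum_distrib_left using term_le by (intro sum_mono) auto
  also have "\<dots> \<le> m * (L2_set a {..<k} * L2_set b {..<k})"
    using L2_set_mult_ineq[of a b "{..<k}"] \<open>0 \<le> m\<close> by (simp add: a_def b_def mult_left_mono)
  also have "\<dots> = m * (norm y * norm x)"
    using resolution_sum_norm_square[OF resolution] by (simp add: L2_set_def a_def b_def)
  finally have "norm y * norm y \<le> (m * norm x) * norm y" by (simp add: power2_eq_square mult_ac)
  thus ?thesis
    using \<open>0 \<le> m\<close> by (cases "norm y = 0") (auto simp: y_def mult_le_cancel_right)
qed

lemma op_norm_is_M_norm: "is_M_norm (op_norm :: 'n::finite cmat \<Rightarrow> real)"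
  unfolding is_M_norm_def is_matrix_norm_def
proof (intro conjI allI impI)
  fix k and X C :: "nat \<Rightarrow> 'n cmat"
  assume resolution: "(\<Sum>i<k. cadj (C i) ** C i) = mat 1"
  hence "k \<noteq> 0" using mat_1_neq_0 by (metis lessThan_0 sum.empty)
  have le_max: "op_norm (X i) \<le> Max ((\<lambda>i. op_norm (X i)) ` {..<k})" if "i < k" for i
    using that by (intro Max_ge) auto
  moreover have "0 \<le> Max ((\<lambda>i. op_norm (X i)) ` {..<k})"
    using \<open>k \<noteq> 0\<close> le_max[of 0] op_norm_nonneg[of "X 0"] by (meson order_trans gr0I)
  ultimately show "op_norm (\<Sum>i<k. cadj (C i) ** X i ** C i) \<le> Max ((\<lambda>i. op_norm (X i)) ` {..<k})"
    using norm_unital_channel_le[OF resolution] op_norm_le by blast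
qed (use op_norm_nonneg op_norm_eq_0_iff op_norm_cscale op_norm_triangle in auto)

section \<open>Square roots and the unitary dilation of a contraction\<close>

definition psd :: "'n::finite cmat \<Rightarrow> bool" where
  "psd P \<longleftrightarrow> herm P \<and> (\<forall>x. 0 \<le> Re (cinner x (P *v x)))"

text \<open>Besides \<open>S\<^sup>2 = P\<close>, the square root built from a spectral decomposition acts as
  \<open>\<surd>\<mu>\<close> on every \<open>\<mu>\<close>-eigenvector of P; this is what makes it commute with intertwiners.\<close>

lemma psd_sqrt:
  fixes P :: "'n::finite cmat"
  assumes "psd P"
  shows "\<exists>S. herm S \<and> S ** S = P \<and>
     (\<forall>x (\<mu>::real). P *v x = complex_of_real \<mu> *s x \<longrightarrow> S *v x = complex_of_real (sqrt \<mu>) *s x)"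
proof -
  have P: "herm P" using assms by (simp add: psd_def)
  obtain B where on: "orthonormal_set B" and B: "(\<Sum>b\<in>B. outer b b) = mat 1"
    and eig: "\<forall>b\<in>B. \<exists>a::real. P *v b = complex_of_real a *s b"
    using herm_spectral[OF P] by blast
  obtain \<nu> where \<nu>: "\<And>b. b \<in> B \<Longrightarrow> P *v b = complex_of_real (\<nu> b) *s b"
    using eig by metis
  have coeff: "cinner b (P *v x) = complex_of_real (\<nu> b) * cinner b x" if "b \<in> B" for b x
    using P \<nu>[OF that] by (simp add: cinner_adj herm_def cinner_scale_left)
  have \<nu>_nonneg: "0 \<le> \<nu> b" if "b \<in> B" for b
    using assms coeff[OF that, of b] on that
    unfolding psd_def orthonormal_set_def by (metis Re_complex_of_real mult.right_neutral)
  define S where "S = (\<Sum>b\<in>B. cscale (complex_of_real (sqrt (\<nu> b))) (outer b b))"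
  have S_eig: "S *v x = complex_of_real (sqrt \<mu>) *s x"
    if Px: "P *v x = complex_of_real \<mu> *s x" for x \<mu>
  proof -
    have coeff_eq: "complex_of_real (sqrt (\<nu> b)) * cinner b x = complex_of_real (sqrt \<mu>) * cinner b x"
      if "b \<in> B" for b
    proof -
      have "cinner b x = 0 \<or> \<nu> b = \<mu>"
        using coeff[OF that, of x] Px by (simp add: cinner_scale_right) metis
      thus ?thesis by auto
    qed
    have "S *v x = (\<Sum>b\<in>B. (complex_of_real (sqrt (\<nu> b)) * cinner b x) *s b)"
      by (simp add: S_def sum_mv cscale_mv outer_mv vector_smult_assoc)
    also have "\<dots> = (\<Sum>b\<in>B. (complex_of_real (sqrt \<mu>) * cinner b x) *s b)"
      using coeff_eq by (intro sum.cong) auto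
    also have "\<dots> = complex_of_real (sqrt \<mu>) *s (\<Sum>b\<in>B. cinner b x *s b)"
      by (simp add: vec.scale_sum_right)
    also have "\<dots> = complex_of_real (sqrt \<mu>) *s x"
      using orthonormal_expansion[OF B, of x] by simp
    finally show ?thesis .
  qed
  have "S ** S = P"
  proof (rule eq_on_orthonormal_basis[OF B], intro ballI)
    fix b assume b: "b \<in> B"
    have Sb: "S *v b = complex_of_real (sqrt (\<nu> b)) *s b" using S_eig \<nu>[OF b] by blast
    have "sqrt (\<nu> b) * sqrt (\<nu> b) = \<nu> b" using \<nu>_nonneg[OF b] by simp
    thus "(S ** S) *v b = P *v b"
      using \<nu>[OF b] Sb
      by (simp add: matrix_vector_mul_assoc[symmetric] mv_cscale vector_smult_assoc
          flip: of_real_mult)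
  qed
  moreover have "herm S" by (simp add: herm_def S_def cadj_sum cadj_cscale cadj_outer)
  ultimately show ?thesis using S_eig by blast
qed

lemma psd_sqrt_intertwines:
  fixes A P Q S T :: "'n::finite cmat"
  assumes P: "herm P" and QA: "Q ** A = A ** P"
    and S: "\<forall>x (\<mu>::real). P *v x = complex_of_real \<mu> *s x \<longrightarrow> S *v x = complex_of_real (sqrt \<mu>) *s x"
    and T: "\<forall>x (\<mu>::real). Q *v x = complex_of_real \<mu> *s x \<longrightarrow> T *v x = complex_of_real (sqrt \<mu>) *s x"
  shows "T ** A = A ** S"
proof -
  obtain B where B: "(\<Sum>b\<in>B. outer b b) = mat 1"
    and eig: "\<forall>b\<in>B. \<exists>a::real. P *v b = complex_of_real a *s b"
    using herm_spectral[OF P] by blast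
  show ?thesis
  proof (rule eq_on_orthonormal_basis[OF B], intro ballI)
    fix b assume "b \<in> B"
    then obtain a :: real where a: "P *v b = complex_of_real a *s b" using eig by blast
    have "Q *v (A *v b) = A *v (P *v b)" by (simp add: matrix_vector_mul_assoc QA)
    hence "T *v (A *v b) = complex_of_real (sqrt a) *s (A *v b)" using T a by (simp add: mv_cscale)
    moreover have "S *v b = complex_of_real (sqrt a) *s b" using S a by blast
    ultimately show "(T ** A) *v b = (A ** S) *v b"
      by (simp add: matrix_vector_mul_assoc[symmetric] mv_cscale)
  qed
qed

lemma psd_defect:
  fixes A :: "'n::finite cmat"
  assumes "op_norm A \<le> 1"
  shows "psd (mat 1 - cadj A ** A)"
  unfolding psd_def
proof (intro conjI allI)
  show "herm (mat 1 - cadj A ** A)" by (simp add: herm_def cadj_diff cadj_mult)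
  fix x
  have "cinner x ((mat 1 - cadj A ** A) *v x) = cinner x x - cinner (A *v x) (A *v x)"
    by (simp add: matrix_vector_mult_diff_rdistrib matrix_vector_mul_assoc[symmetric]
        cinner_diff_right cinner_adj')
  hence "Re (cinner x ((mat 1 - cadj A ** A) *v x)) = (norm x)\<^sup>2 - (norm (A *v x))\<^sup>2"
    by (simp add: cinner_self)
  moreover have "norm (A *v x) \<le> norm x"
  proof -
    have "norm (A *v x) \<le> op_norm A * norm x" by (rule op_norm_bound)
    also have "\<dots> \<le> norm x" using mult_right_mono[OF assms norm_ge_zero] by simp
    finally show ?thesis .
  qed
  hence "(norm (A *v x))\<^sup>2 \<le> (norm x)\<^sup>2" by (simp add: power_mono)
  ultimately show "0 \<le> Re (cinner x ((mat 1 - cadj A ** A) *v x))" by simp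
qed

definition block :: "'n::finite cmat \<Rightarrow> 'n cmat \<Rightarrow> 'n cmat \<Rightarrow> 'n cmat \<Rightarrow> ('n + 'n) cmat" where
  "block A B C D = (\<chi> i j. case i of
       Inl a \<Rightarrow> (case j of Inl b \<Rightarrow> A$a$b | Inr b \<Rightarrow> B$a$b)
     | Inr a \<Rightarrow> (case j of Inl b \<Rightarrow> C$a$b | Inr b \<Rightarrow> D$a$b))"

definition corner :: "('n::finite + 'n) cmat \<Rightarrow> 'n cmat" where
  "corner M = (\<chi> a b. M $ Inl a $ Inl b)"

definition upper :: "complex^('n::finite + 'n) \<Rightarrow> complex^'n" where
  "upper z = (\<chi> a. z $ Inl a)"

lemma sum_UNIV_Plus:
  "(\<Sum>k\<in>UNIV. f k) = (\<Sum>a\<in>UNIV. f (Inl a)) + (\<Sum>b\<in>UNIV. f (Inr b))"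
  for f :: "('a::finite + 'b::finite) \<Rightarrow> 'c::comm_monoid_add"
  using sum.Plus[of "UNIV::'a set" "UNIV::'b set" f] by (simp add: o_def)

lemma block_mult:
  "block A B C D ** block E F G H =
     block (A ** E + B ** G) (A ** F + B ** H) (C ** E + D ** G) (C ** F + D ** H)"
  by (simp add: vec_eq_iff matrix_matrix_mult_def block_def sum_UNIV_Plus split: sum.split)

lemma cadj_block: "cadj (block A B C D) = block (cadj A) (cadj C) (cadj B) (cadj D)"
  by (simp add: vec_eq_iff cadj_def block_def split: sum.split)

lemma block_mat_1: "block (mat 1) 0 0 (mat 1) = (mat 1 :: ('n::finite + 'n) cmat)"
  by (simp add: vec_eq_iff block_def mat_def split: sum.split)

lemma corner_block [simp]: "corner (block A B C D) = A"
  by (simp add: vec_eq_iff corner_def block_def)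

lemma corner_mat_1 [simp]: "corner (mat 1) = mat 1"
  by (simp add: vec_eq_iff corner_def mat_def)

lemma corner_sum: "corner (\<Sum>i\<in>I. f i) = (\<Sum>i\<in>I. corner (f i))"
  by (simp add: vec_eq_iff corner_def sum_component)

lemma corner_cscale: "corner (cscale c M) = cscale c (corner M)"
  and corner_outer: "corner (outer u v) = outer (upper u) (upper v)"
  by (simp_all add: vec_eq_iff corner_def cscale_def outer_def upper_def)

text \<open>Halmos' dilation
  \<open>U = [A, (I - A A\<^sup>*)\<^sup>1\<^sup>/\<^sup>2; (I - A\<^sup>*A)\<^sup>1\<^sup>/\<^sup>2, -A\<^sup>*]\<close>; it is unitary because
  \<open>(I - A A\<^sup>*)\<^sup>1\<^sup>/\<^sup>2 A = A (I - A\<^sup>*A)\<^sup>1\<^sup>/\<^sup>2\<close>.\<close>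

lemma unitary_dilation:
  fixes A :: "'n::finite cmat"
  assumes "op_norm A \<le> 1"
  shows "\<exists>U. cadj U ** U = mat 1 \<and> corner U = A"
proof -
  have A': "op_norm (cadj A) \<le> 1" using assms by (simp add: op_norm_cadj)
  obtain S where S: "herm S" "S ** S = mat 1 - cadj A ** A"
    and S_eig: "\<forall>x (\<mu>::real). (mat 1 - cadj A ** A) *v x = complex_of_real \<mu> *s x \<longrightarrow>
                  S *v x = complex_of_real (sqrt \<mu>) *s x"
    using psd_sqrt[OF psd_defect[OF assms]] by blast
  obtain T where T: "herm T" "T ** T = mat 1 - A ** cadj A"
    and T_eig: "\<forall>x (\<mu>::real). (mat 1 - A ** cadj A) *v x = complex_of_real \<mu> *s x \<longrightarrow>
                  T *v x = complex_of_real (sqrt \<mu>) *s x"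
    using psd_sqrt[OF psd_defect[OF A']] by auto
  have "(mat 1 - A ** cadj A) ** A = A ** (mat 1 - cadj A ** A)"
    by (simp add: matrix_eq matrix_vector_mult_diff_rdistrib matrix_vector_mult_diff_distrib
        flip: matrix_vector_mul_assoc)
  hence TA: "T ** A = A ** S"
    using psd_sqrt_intertwines psd_defect[OF assms] S_eig T_eig unfolding psd_def by blast
  have AT: "cadj A ** T = S ** cadj A"
    using arg_cong[OF TA, of cadj] S(1) T(1) by (simp add: cadj_mult herm_def)
  define U where "U = block A T S (- cadj A)"
  have "cadj U ** U = block (cadj A ** A + S ** S) (cadj A ** T - S ** cadj A)
                            (T ** A - A ** S) (T ** T + A ** cadj A)"
    using S(1) T(1) by (simp add: U_def cadj_block block_mult cadj_uminus herm_def
        matrix_mul_uminus_left matrix_mul_uminus_right)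
  also have "\<dots> = mat 1" using S(2) T(2) TA AT by (simp flip: block_mat_1)
  finally have "cadj U ** U = mat 1" .
  thus ?thesis by (auto simp: U_def)
qed

lemma unitary_spectral:
  fixes U :: "'m::finite cmat"
  assumes "cadj U ** U = mat 1"
  shows "\<exists>B \<mu>. finite B \<and> (\<Sum>b\<in>B. outer b b) = mat 1 \<and> (\<forall>b\<in>B. cmod (\<mu> b) = 1) \<and>
           U = (\<Sum>b\<in>B. cscale (\<mu> b) (outer b b))"
proof -
  have "U ** cadj U = mat 1" using assms matrix_left_right_inverse by blast
  then obtain B where on: "orthonormal_set B" and fin: "finite B" and B: "(\<Sum>b\<in>B. outer b b) = mat 1"
    and "\<forall>b\<in>B. \<exists>\<mu>. U *v b = \<mu> *s b"
    using normal_spectral[of U] assms by auto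
  then obtain \<mu> where \<mu>: "\<And>b. b \<in> B \<Longrightarrow> U *v b = \<mu> b *s b" by metis
  have "cmod (\<mu> b) = 1" if b: "b \<in> B" for b
  proof -
    have bb: "cinner b b = 1" using on b unfolding orthonormal_set_def by blast
    have "cinner (U *v b) (U *v b) = 1"
      using assms bb by (simp add: cinner_adj' matrix_vector_mul_assoc)
    hence "\<mu> b * cnj (\<mu> b) = 1"
      using \<mu>[OF b] bb by (simp add: cinner_scale_left cinner_scale_right)
    hence "(cmod (\<mu> b))\<^sup>2 = 1" by (metis complex_norm_square of_real_eq_1_iff)
    thus ?thesis using norm_ge_zero[of "\<mu> b"] by (auto simp: power2_eq_1_iff)
  qed
  moreover have "U = (\<Sum>b\<in>B. cscale (\<mu> b) (outer b b))"
  proof -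
    have "U = U ** (\<Sum>b\<in>B. outer b b)" using B by simp
    also have "\<dots> = (\<Sum>b\<in>B. cscale (\<mu> b) (outer b b))"
      unfolding mult_sum_right using \<mu> by (intro sum.cong refl) (simp add: mult_outer cscale_outer)
    finally show ?thesis .
  qed
  ultimately show ?thesis using fin B by blast
qed

lemma contraction_unitary_mixture:
  fixes A :: "'n::finite cmat"
  assumes "op_norm A \<le> 1"
  shows "\<exists>(Z :: (complex^('n + 'n)) set) \<mu> w. finite Z \<and> (\<forall>z\<in>Z. cmod (\<mu> z) = 1) \<and>
           (\<Sum>z\<in>Z. outer (w z) (w z)) = mat 1 \<and> (\<Sum>z\<in>Z. cscale (\<mu> z) (outer (w z) (w z))) = A"
proof -
  obtain U where U: "cadj U ** U = mat 1" and A: "corner U = A"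
    using unitary_dilation[OF assms] by blast
  obtain Z \<mu> where "finite Z" "\<forall>z\<in>Z. cmod (\<mu> z) = 1" "(\<Sum>z\<in>Z. outer z z) = mat 1"
    and "U = (\<Sum>z\<in>Z. cscale (\<mu> z) (outer z z))"
    using unitary_spectral[OF U] by blast
  have "(\<Sum>z\<in>Z. outer (upper z) (upper z)) = corner (\<Sum>z\<in>Z. outer z z)"
    and "(\<Sum>z\<in>Z. cscale (\<mu> z) (outer (upper z) (upper z))) = corner U"
    by (simp_all add: \<open>U = _\<close> corner_sum corner_cscale corner_outer)
  hence "(\<Sum>z\<in>Z. outer (upper z) (upper z)) = mat 1"
    and "(\<Sum>z\<in>Z. cscale (\<mu> z) (outer (upper z) (upper z))) = A"
    using \<open>(\<Sum>z\<in>Z. outer z z) = mat 1\<close> A by simp_all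
  thus ?thesis using \<open>finite Z\<close> \<open>\<forall>z\<in>Z. cmod (\<mu> z) = 1\<close> by blast
qed

section \<open>The numerical radius and its dual\<close>

lemma norm_axis_1_complex: "norm (axis k (1::complex) :: complex^'n::finite) = 1"
proof -
  have "(norm (axis k (1::complex) :: complex^'n))\<^sup>2 = (\<Sum>i\<in>UNIV. if i = k then 1 else 0)"
    unfolding power2_norm_cvec by (intro sum.cong refl) (simp add: axis_def)
  thus ?thesis by (simp add: power2_eq_1_iff)
qed

lemma quadratic_form_le_op_norm: "cmod (cinner x (X *v x)) \<le> op_norm X * (norm x)\<^sup>2"
proof -
  have "cmod (cinner x (X *v x)) \<le> norm x * (op_norm X * norm x)"
    using cinner_cauchy_schwarz[of x "X *v x"] op_norm_bound[of X x]
    by (meson mult_left_mono norm_ge_zero order_trans)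
  thus ?thesis by (simp add: power2_eq_square mult_ac)
qed

lemma num_radius_bdd:
  fixes X :: "'n::finite cmat"
  shows "bdd_above ((\<lambda>x. cmod (cinner x (X *v x))) ` {x. norm x = 1})"
proof (rule bdd_aboveI2)
  fix x :: "complex^'n" assume "x \<in> {x. norm x = 1}"
  thus "cmod (cinner x (X *v x)) \<le> op_norm X" using quadratic_form_le_op_norm[of x X] by simp
qed

lemma num_radius_upper: "norm x = 1 \<Longrightarrow> cmod (cinner x (X *v x)) \<le> num_radius X"
  unfolding num_radius_def by (rule cSUP_upper[OF _ num_radius_bdd]) simp

lemma num_radius_least:
  fixes X :: "'n::finite cmat"
  assumes "\<And>x. norm x = 1 \<Longrightarrow> cmod (cinner x (X *v x)) \<le> c"
  shows "num_radius X \<le> c"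
proof -
  have "{x::complex^'n. norm x = 1} \<noteq> {}" using norm_axis_1_complex by blast
  thus ?thesis unfolding num_radius_def using assms by (intro cSUP_least) auto
qed

lemma num_radius_nonneg: "0 \<le> num_radius (X::'n::finite cmat)"
  using num_radius_upper[OF norm_axis_1_complex] norm_ge_zero order_trans by blast

lemma num_radius_zero [simp]: "num_radius (0::'n::finite cmat) = 0"
  by (rule antisym[OF num_radius_least num_radius_nonneg]) simp

lemma quadratic_form_le_num_radius: "cmod (cinner v (X *v v)) \<le> num_radius X * (norm v)\<^sup>2"
proof (cases "v = 0")
  case False
  define u where "u = complex_of_real (1 / norm v) *s v"
  have "norm u = 1" using False by (simp add: u_def norm_cscale norm_divide)
  moreover have "cinner u (X *v u) = complex_of_real ((1 / norm v)\<^sup>2) * cinner v (X *v v)"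
    by (simp add: u_def mv_cscale cinner_scale_left cinner_scale_right power2_eq_square)
  ultimately have "(1 / norm v)\<^sup>2 * cmod (cinner v (X *v v)) \<le> num_radius X"
    using num_radius_upper[of u X] by (simp add: norm_mult norm_power norm_divide)
  thus ?thesis using False by (simp add: field_simps power2_eq_square)
qed simp

lemma num_radius_outer_le:
  fixes y u :: "complex^'n::finite"
  shows "num_radius (outer y u) \<le> norm y * norm u"
proof (rule num_radius_least)
  fix v :: "complex^'n" assume "norm v = 1"
  have "cmod (cinner v (outer y u *v v)) = cmod (cinner u v) * cmod (cinner v y)"
    by (simp add: outer_mv cinner_scale_right norm_mult)
  also have "\<dots> \<le> (norm u * norm v) * (norm v * norm y)"
    by (intro mult_mono cinner_cauchy_schwarz) auto
  finally show "cmod (cinner v (outer y u *v v)) \<le> norm y * norm u"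
    using \<open>norm v = 1\<close> by (simp add: mult.commute)
qed

text \<open>Polarization: with \<open>q(c) = \<langle>x + c y, X(x + c y)\<rangle>\<close> one has
  \<open>4\<langle>x, X y\<rangle> = q(1) - q(-1) - \<i> q(\<i>) + \<i> q(-\<i>)\<close>, and \<open>|q(c)| \<le> 4 \<omega>(X)\<close> when \<open>|c| = 1\<close>.\<close>

lemma num_radius_polarization:
  assumes "norm x = 1" "norm y = 1"
  shows "cmod (cinner x (X *v y)) \<le> 4 * num_radius X"
proof -
  define q where "q c = cinner (x + c *s y) (X *v (x + c *s y))" for c
  have q: "q c = cinner x (X *v x) + c * cinner x (X *v y) + cnj c * cinner y (X *v x)
                 + cnj c * c * cinner y (X *v y)" for c
    by (simp add: q_def matrix_vector_right_distrib mv_cscale cinner_add_left cinner_add_right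
        cinner_scale_left cinner_scale_right distrib_left mult.assoc)
  have q_le: "cmod (q c) \<le> 4 * num_radius X" if "cmod c = 1" for c
  proof -
    have "norm (x + c *s y) \<le> 2"
      using norm_triangle_ineq[of x "c *s y"] assms that by (simp add: norm_cscale)
    hence "(norm (x + c *s y))\<^sup>2 \<le> 2\<^sup>2" by (rule power_mono) simp
    hence "num_radius X * (norm (x + c *s y))\<^sup>2 \<le> num_radius X * 4"
      using num_radius_nonneg by (intro mult_left_mono) auto
    thus ?thesis
      using quadratic_form_le_num_radius[of "x + c *s y" X] unfolding q_def by simp
  qed
  have "4 * cinner x (X *v y) = q 1 - q (-1) - \<i> * q \<i> + \<i> * q (-\<i>)"
    unfolding q by (simp add: algebra_simps)
  moreover have "cmod (a - b - \<i> * c + \<i> * d) \<le> cmod a + cmod b + cmod c + cmod d"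
    for a b c d :: complex
  proof -
    have "cmod (a - b - \<i> * c + \<i> * d) \<le> cmod (a - b - \<i> * c) + cmod (\<i> * d)"
      by (rule norm_triangle_ineq)
    also have "\<dots> \<le> cmod (a - b) + cmod (\<i> * c) + cmod (\<i> * d)"
      using norm_triangle_ineq4[of "a - b" "\<i> * c"] by simp
    also have "\<dots> \<le> cmod a + cmod b + cmod c + cmod d"
      using norm_triangle_ineq4[of a b] by (simp add: norm_mult)
    finally show ?thesis .
  qed
  ultimately have "4 * cmod (cinner x (X *v y)) \<le> cmod (q 1) + cmod (q (-1)) + cmod (q \<i>) + cmod (q (-\<i>))"
    by (metis norm_mult norm_numeral)
  also have "\<dots> \<le> 16 * num_radius X"
    using q_le[of 1] q_le[of "-1"] q_le[of \<i>] q_le[of "-\<i>"] by simp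
  finally show ?thesis by simp
qed

lemma mtrace_adj_mult_bound:
  fixes A X :: "'n::finite cmat"
  shows "cmod (mtrace (cadj A ** X)) \<le> 4 * num_radius X * (\<Sum>i\<in>UNIV. \<Sum>j\<in>UNIV. cmod (A$j$i))"
proof -
  have entry: "cmod (X$j$i) \<le> 4 * num_radius X" for i j
    using num_radius_polarization[of "axis j 1" "axis i 1" X]
    by (simp add: norm_axis_1_complex cinner_axis mv_axis)
  have "cmod (mtrace (cadj A ** X)) = cmod (\<Sum>i\<in>UNIV. \<Sum>j\<in>UNIV. cnj (A$j$i) * X$j$i)"
    by (simp add: mtrace_def matrix_matrix_mult_def cadj_def)
  also have "\<dots> \<le> (\<Sum>i\<in>UNIV. \<Sum>j\<in>UNIV. cmod (A$j$i) * cmod (X$j$i))"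
    by (intro order_trans[OF norm_sum] sum_mono order_trans[OF norm_sum]) (simp add: norm_mult)
  also have "\<dots> \<le> (\<Sum>i\<in>UNIV. \<Sum>j\<in>UNIV. cmod (A$j$i) * (4 * num_radius X))"
    by (intro sum_mono mult_left_mono entry) simp
  finally show ?thesis by (simp add: sum_distrib_left sum_distrib_right mult_ac)
qed

lemma num_radius_dual_upper:
  "num_radius X \<le> 1 \<Longrightarrow> cmod (mtrace (cadj A ** X)) \<le> num_radius_dual (A::'n::finite cmat)"
  unfolding num_radius_dual_def
proof (rule cSUP_upper)
  show "bdd_above ((\<lambda>X. cmod (mtrace (cadj A ** X))) ` {X. num_radius X \<le> 1})"
  proof (rule bdd_aboveI2)
    fix X :: "'n cmat" assume "X \<in> {X. num_radius X \<le> 1}"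
    show "cmod (mtrace (cadj A ** X)) \<le> 4 * (\<Sum>i\<in>UNIV. \<Sum>j\<in>UNIV. cmod (A$j$i))"
    proof -
      have "num_radius X * (\<Sum>i\<in>UNIV. \<Sum>j\<in>UNIV. cmod (A$j$i)) \<le> (\<Sum>i\<in>UNIV. \<Sum>j\<in>UNIV. cmod (A$j$i))"
        using \<open>X \<in> _\<close> by (intro mult_left_le_one_le sum_nonneg num_radius_nonneg) auto
      thus ?thesis using mtrace_adj_mult_bound[of A X] by linarith
    qed
  qed
qed simp

lemma num_radius_dual_least:
  fixes A :: "'n::finite cmat"
  assumes "\<And>X. num_radius X \<le> 1 \<Longrightarrow> cmod (mtrace (cadj A ** X)) \<le> c"
  shows "num_radius_dual A \<le> c"
proof -
  have "(0::'n cmat) \<in> {X. num_radius X \<le> 1}" by simp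
  hence "{X::'n cmat. num_radius X \<le> 1} \<noteq> {}" by blast
  thus ?thesis unfolding num_radius_dual_def by (rule cSUP_least) (simp add: assms)
qed

lemma num_radius_dual_nonneg: "0 \<le> num_radius_dual (A::'n::finite cmat)"
  using num_radius_dual_upper[of 0 A] by (simp add: mtrace_def)

lemma op_norm_le_num_radius_dual: "op_norm A \<le> num_radius_dual (A::'n::finite cmat)"
proof (rule op_norm_le_unit[OF num_radius_dual_nonneg])
  fix u :: "complex^'n" assume u: "norm u = 1"
  show "norm (A *v u) \<le> num_radius_dual A"
  proof (cases "A *v u = 0")
    case False
    \<comment> \<open>test against the rank-one matrix \<open>y u\<^sup>*\<close> with \<open>y = A u / |A u|\<close>\<close>
    define y where "y = complex_of_real (1 / norm (A *v u)) *s (A *v u)"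
    have "num_radius (outer y u) \<le> 1"
      using num_radius_outer_le[of y u] u False by (simp add: y_def norm_cscale norm_divide)
    moreover have "mtrace (cadj A ** outer y u) = cinner (A *v u) y"
      by (simp add: mult_outer mtrace_outer cinner_adj')
    moreover have "cinner (A *v u) y = complex_of_real (norm (A *v u))"
      using False by (simp add: y_def cinner_scale_right cinner_self power2_eq_square)
    ultimately show ?thesis using num_radius_dual_upper[of "outer y u" A] by simp
  qed (simp add: num_radius_dual_nonneg)
qed

lemma num_radius_dual_rank_one:
  fixes e :: "complex^'n::finite"
  assumes "norm e = 1"
  shows "num_radius_dual (outer (c *s e) e) \<le> cmod c"
proof (rule num_radius_dual_least)
  fix Y :: "'n cmat" assume "num_radius Y \<le> 1"
  have "cmod (mtrace (cadj (outer (c *s e) e) ** Y)) = cmod c * cmod (cinner e (Y *v e))"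
    by (simp add: mtrace_adj_outer_mult cinner_scale_left norm_mult)
  also have "\<dots> \<le> cmod c * 1"
    using num_radius_upper[OF assms, of Y] \<open>num_radius Y \<le> 1\<close> by (intro mult_left_mono) auto
  finally show "cmod (mtrace (cadj (outer (c *s e) e) ** Y)) \<le> cmod c" by simp
qed

section \<open>Maximality of the operator norm\<close>

lemma M_norm_finite_sum:
  fixes N :: "'n::finite cmat \<Rightarrow> real" and C X :: "'i \<Rightarrow> 'n cmat"
  assumes N: "is_M_norm N" and I: "finite I"
    and resolution: "(\<Sum>i\<in>I. cadj (C i) ** C i) = mat 1"
  shows "N (\<Sum>i\<in>I. cadj (C i) ** X i ** C i) \<le> Max ((\<lambda>i. N (X i)) ` I)"
proof -
  obtain h where h: "bij_betw h {..<card I} I"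
    using ex_bij_betw_nat_finite[OF I] by (auto simp: lessThan_atLeast0)
  have "(\<Sum>j<card I. cadj (C (h j)) ** C (h j)) = mat 1"
    using resolution sum.reindex_bij_betw[OF h, of "\<lambda>i. cadj (C i) ** C i"] by simp
  hence "N (\<Sum>j<card I. cadj (C (h j)) ** X (h j) ** C (h j))
           \<le> Max ((\<lambda>j. N (X (h j))) ` {..<card I})"
    using N[unfolded is_M_norm_def, THEN conjunct2, rule_format,
        where k = "card I" and C = "\<lambda>j. C (h j)" and X = "\<lambda>j. X (h j)"] by simp
  moreover have "(\<lambda>j. N (X (h j))) ` {..<card I} = (\<lambda>i. N (X i)) ` I"
    using h unfolding bij_betw_def by (metis image_image)
  ultimately show ?thesis
    using sum.reindex_bij_betw[OF h, of "\<lambda>i. cadj (C i) ** X i ** C i"] by simp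
qed

text \<open>With a fixed unit vector e, the channel with Kraus operators \<open>e w\<^sub>z\<^sup>*\<close> maps the
  rank-one matrices \<open>\<mu>\<^sub>z e e\<^sup>*\<close>, whose dual numerical radius is \<open>|\<mu>\<^sub>z|\<close>, to
  \<open>\<Sum> \<mu>\<^sub>z w\<^sub>z w\<^sub>z\<^sup>*\<close>.\<close>

lemma M_norm_mixture_le:
  fixes N :: "'n::finite cmat \<Rightarrow> real" and w :: "'z \<Rightarrow> complex^'n"
  assumes N: "is_M_norm N" and below: "\<forall>A. N A \<le> num_radius_dual A"
    and Z: "finite Z" and \<mu>: "\<forall>z\<in>Z. cmod (\<mu> z) \<le> 1"
    and resolution: "(\<Sum>z\<in>Z. outer (w z) (w z)) = mat 1"
  shows "N (\<Sum>z\<in>Z. cscale (\<mu> z) (outer (w z) (w z))) \<le> 1"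
proof -
  define e :: "complex^'n" where "e = axis undefined 1"
  have e: "norm e = 1" "cinner e e = 1" by (simp_all add: e_def norm_axis_1_complex cinner_axis)
  define C where "C z = outer e (w z)" for z
  define X where "X z = outer (\<mu> z *s e) e" for z
  have "(\<Sum>z\<in>Z. cadj (C z) ** C z) = mat 1"
    using resolution by (simp add: C_def cadj_outer mult_outer outer_mv e)
  hence "N (\<Sum>z\<in>Z. cadj (C z) ** X z ** C z) \<le> Max ((\<lambda>z. N (X z)) ` Z)"
    by (rule M_norm_finite_sum[OF N Z])
  moreover have "cadj (C z) ** X z ** C z = cscale (\<mu> z) (outer (w z) (w z))" for z
    by (simp add: C_def X_def cadj_outer mult_outer outer_mv cscale_outer mv_cscale
        cinner_scale_right e)
  moreover have "Max ((\<lambda>z. N (X z)) ` Z) \<le> 1"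
  proof -
    have "Z \<noteq> {}" using resolution mat_1_neq_0 by auto
    moreover have "N (X z) \<le> 1" if "z \<in> Z" for z
      using below num_radius_dual_rank_one[OF e(1), of "\<mu> z"] \<mu> that
      unfolding X_def by (meson order_trans)
    ultimately show ?thesis using Z by (simp add: Max_le_iff)
  qed
  ultimately show ?thesis by simp
qed

lemma M_norm_le_op_norm:
  fixes N :: "'n::finite cmat \<Rightarrow> real"
  assumes N: "is_M_norm N" and below: "\<forall>A. N A \<le> num_radius_dual A"
  shows "N A \<le> op_norm A"
proof (cases "A = 0")
  case True
  have "N 0 = 0" using N unfolding is_M_norm_def is_matrix_norm_def by blast
  thus ?thesis using True op_norm_nonneg[of A] by simp
next
  case False
  define c where "c = op_norm A"
  have "c > 0" using False op_norm_nonneg[of A] op_norm_eq_0_iff[of A] by (simp add: c_def)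
  define A' where "A' = cscale (complex_of_real (1 / c)) A"
  have "op_norm A' \<le> 1" using \<open>c > 0\<close> by (simp add: A'_def op_norm_cscale c_def norm_divide)
  then obtain Z :: "(complex^('n + 'n)) set" and \<mu> w where "finite Z" "\<forall>z\<in>Z. cmod (\<mu> z) = 1"
    and "(\<Sum>z\<in>Z. outer (w z) (w z)) = mat 1" and "(\<Sum>z\<in>Z. cscale (\<mu> z) (outer (w z) (w z))) = A'"
    using contraction_unitary_mixture by blast
  hence "N A' \<le> 1" using M_norm_mixture_le[OF N below, of Z \<mu> w] by simp
  have "A = cscale (complex_of_real c) A'"
    using \<open>c > 0\<close> by (simp add: A'_def cscale_cscale flip: of_real_mult)
  hence "N A = c * N A'"
    using N \<open>c > 0\<close> unfolding is_M_norm_def is_matrix_norm_def by (metis norm_of_real abs_of_pos)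
  also have "\<dots> \<le> c" using \<open>N A' \<le> 1\<close> \<open>c > 0\<close> by simp
  finally show ?thesis by (simp add: c_def)
qed

theorem corollary3p5:
  shows "is_M_norm (op_norm :: 'n::finite cmat \<Rightarrow> real) \<and>
         (\<forall>A::'n cmat. op_norm A \<le> num_radius_dual A) \<and>
         (\<forall>N::'n cmat \<Rightarrow> real. is_M_norm N \<and> (\<forall>A. N A \<le> num_radius_dual A) \<longrightarrow>
             (\<forall>A. N A \<le> op_norm A))"
  using op_norm_is_M_norm op_norm_le_num_radius_dual M_norm_le_op_norm by blast

end
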